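(* Let $T>0$, $\lambda_1,\lambda_2>0$, $p_{12},p_{21}\in[0,1]$, $r_1,r_2,h_1,h_2\ge0$ and $c_1,c_2\in\mathbb{R}$. For nonnegative integers $Q_1,Q_2$ define $$\pi^{(1)}(Q_1,Q_2)=\frac1T\Big[(r_1-c_1)Q_1+(r_2-c_2)Q_2-(r_1+h_1)E_{Q_1,Q_2}[n_1(T)]-(r_2+h_2)E_{Q_1,Q_2}[n_2(T)]\Big],$$ where $E_{Q_1,Q_2}$ denotes expectation for the inventory CTMC started at $(Q_1,Q_2)$. Then $\pi^{(1)}$ is submodular, i.e. for all integers $Q_1,Q_2\ge0$, $$\pi^{(1)}(Q_1+1,Q_2+1)-\pi^{(1)}(Q_1+1,Q_2)-\pi^{(1)}(Q_1,Q_2+1)+\pi^{(1)}(Q_1,Q_2)\le 0.$$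
   Context: Two products; customers wanting product $i$ arrive as independent Poisson processes of rate $\lambda_i$; a customer who wants product $i$ and finds it out of stock while product $j\ne i$ is in stock buys one unit of $j$ with probability $p_{ij}$ (otherwise the sale is lost). The inventory CTMC $\{(n_1(t),n_2(t))\}$ started at $(Q_1,Q_2)$ (no replenishment) has state space $\{0,\dots,Q_1\}\times\{0,\dots,Q_2\}$ and transition rates: from $(i_1,i_2)$ with $i_1,i_2\ge1$, to $(i_1-1,i_2)$ at rate $\lambda_1$ and to $(i_1,i_2-1)$ at rate $\lambda_2$; from $(i_1,0)$ with $i_1\ge 1$, to $(i_1-1,0)$ at rate $s_1=\lambda_1+\lambda_2p_{21}$; from $(0,i_2)$ with $i_2\ge1$, to $(0,i_2-1)$ at rate $s_2=\lambda_2+\lambda_1p_{12}$; $(0,0)$ is absorbing. $r_i,c_i,h_i$ are the retail price, unit purchase cost, and end-of-period holding cost of product $i$. *)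

theory Defs
  imports Complex_Main
begin

definition inv_states :: "nat \<Rightarrow> nat \<Rightarrow> (nat \<times> nat) set" where
  "inv_states Q1 Q2 = {0..Q1} \<times> {0..Q2}"

definition inv_rate :: "real \<Rightarrow> real \<Rightarrow> real \<Rightarrow> real \<Rightarrow> nat \<times> nat \<Rightarrow> nat \<times> nat \<Rightarrow> real" where
  "inv_rate l1 l2 p12 p21 a b =
     (case a of (i1, i2) \<Rightarrow>
       if 1 \<le> i1 \<and> 1 \<le> i2 then
         (if b = (i1 - 1, i2) then l1 else if b = (i1, i2 - 1) then l2 else 0)
       else if 1 \<le> i1 \<and> i2 = 0 then
         (if b = (i1 - 1, 0) then l1 + l2 * p21 else 0)
       else if i1 = 0 \<and> 1 \<le> i2 then
         (if b = (0, i2 - 1) then l2 + l1 * p12 else 0)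
       else 0)"

definition inv_gen :: "(nat \<times> nat) set \<Rightarrow> real \<Rightarrow> real \<Rightarrow> real \<Rightarrow> real \<Rightarrow> nat \<times> nat \<Rightarrow> nat \<times> nat \<Rightarrow> real" where
  "inv_gen S l1 l2 p12 p21 a b =
     (if a = b then - (\<Sum>c\<in>S - {a}. inv_rate l1 l2 p12 p21 a c)
      else inv_rate l1 l2 p12 p21 a b)"

fun mat_pow :: "'s set \<Rightarrow> ('s \<Rightarrow> 's \<Rightarrow> real) \<Rightarrow> nat \<Rightarrow> 's \<Rightarrow> 's \<Rightarrow> real" where
  "mat_pow S G 0 a b = (if a = b then 1 else 0)"
| "mat_pow S G (Suc k) a b = (\<Sum>c\<in>S. mat_pow S G k a c * G c b)"

definition ctmc_trans :: "'s set \<Rightarrow> ('s \<Rightarrow> 's \<Rightarrow> real) \<Rightarrow> real \<Rightarrow> 's \<Rightarrow> 's \<Rightarrow> real" where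
  "ctmc_trans S G t a b = (\<Sum>k. t ^ k / fact k * mat_pow S G k a b)"

(* E_{Q1,Q2}[f(n1(T),n2(T))] for the inventory CTMC started at (Q1,Q2). *)
definition inv_expect ::
  "real \<Rightarrow> real \<Rightarrow> real \<Rightarrow> real \<Rightarrow> nat \<Rightarrow> nat \<Rightarrow> real \<Rightarrow> (nat \<times> nat \<Rightarrow> real) \<Rightarrow> real" where
  "inv_expect l1 l2 p12 p21 Q1 Q2 T f =
     (let S = inv_states Q1 Q2 in
      \<Sum>b\<in>S. ctmc_trans S (inv_gen S l1 l2 p12 p21) T (Q1, Q2) b * f b)"

definition pi1 ::
  "real \<Rightarrow> real \<Rightarrow> real \<Rightarrow> real \<Rightarrow> real \<Rightarrow> real \<Rightarrow> real \<Rightarrow> real \<Rightarrow> real \<Rightarrow> real \<Rightarrow> real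
   \<Rightarrow> nat \<Rightarrow> nat \<Rightarrow> real" where
  "pi1 T l1 l2 p12 p21 r1 r2 c1 c2 h1 h2 Q1 Q2 =
     (1 / T) * ((r1 - c1) * real Q1 + (r2 - c2) * real Q2
       - (r1 + h1) * inv_expect l1 l2 p12 p21 Q1 Q2 T (\<lambda>b. real (fst b))
       - (r2 + h2) * inv_expect l1 l2 p12 p21 Q1 Q2 T (\<lambda>b. real (snd b)))"

end

theory Submission
  imports Defs
begin

text \<open>
  With \<open>A\<close> the generator of the chain acting on functions of the state, the
  expectation \<open>E\<^sub>Q[f(n(T))]\<close> is \<open>(e\<^bsup>TA\<^esup> f)(Q)\<close>. Uniformization writes
  \<open>e\<^bsup>TA\<^esup> = e\<^bsup>-LT\<^esup> \<Sum>\<^sub>n T\<^sup>n/n! (L\<cdot>I + A)\<^sup>n\<close>, and once \<open>L\<close> dominates all outflow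
  rates the operator \<open>L\<cdot>I + A\<close> maps the cone of functions that are supermodular
  and nondecreasing and convex along both axes into itself. The coordinate
  functions lie in this cone, so \<open>E[n\<^sub>1(T)]\<close> and \<open>E[n\<^sub>2(T)]\<close> are supermodular in
  the initial stock, and \<open>\<pi>\<close> is submodular because it enters them with
  nonpositive coefficients.
\<close>

lemma mat_pow_abs_le:
  assumes "finite S" and G: "\<And>c d. c \<in> S \<Longrightarrow> d \<in> S \<Longrightarrow> \<bar>G c d\<bar> \<le> M" and "b \<in> S"
  shows "\<bar>mat_pow S G k a b\<bar> \<le> (real (card S) * M) ^ k"
  using \<open>b \<in> S\<close>
proof (induction k arbitrary: b)
  case 0
  then show ?case by simp
next
  case (Suc k)
  have "0 \<le> M"
    using G[OF Suc.prems Suc.prems] by linarith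
  have "\<bar>mat_pow S G (Suc k) a b\<bar> \<le> (\<Sum>c\<in>S. \<bar>mat_pow S G k a c\<bar> * \<bar>G c b\<bar>)"
    by (simp add: abs_mult order_trans[OF sum_abs])
  also have "\<dots> \<le> (\<Sum>c\<in>S. (real (card S) * M) ^ k * M)"
    using Suc G \<open>0 \<le> M\<close> by (intro sum_mono mult_mono) auto
  also have "\<dots> = (real (card S) * M) ^ Suc k"
    by simp
  finally show ?case .
qed

lemma summable_abs_ctmc_trans_series:
  assumes "finite S" and "b \<in> S"
  shows "summable (\<lambda>k. \<bar>t ^ k / fact k * mat_pow S G k a b\<bar>)"
proof (rule summable_comparison_test)
  define K where "K = real (card S) * (\<Sum>c\<in>S. \<Sum>d\<in>S. \<bar>G c d\<bar>)"
  have "\<bar>G c d\<bar> \<le> (\<Sum>c\<in>S. \<Sum>d\<in>S. \<bar>G c d\<bar>)" if "c \<in> S" "d \<in> S" for c d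
    using assms that
    by (intro order_trans[OF _ member_le_sum[of c]] member_le_sum[of d]) (auto intro: sum_nonneg)
  then have bound: "\<bar>mat_pow S G k a b\<bar> \<le> K ^ k" for k
    unfolding K_def using assms by (intro mat_pow_abs_le) auto
  show "\<exists>N. \<forall>k\<ge>N. norm \<bar>t ^ k / fact k * mat_pow S G k a b\<bar> \<le> inverse (fact k) * (\<bar>t\<bar> * K) ^ k"
  proof (intro exI allI impI)
    fix k :: nat
    have "norm \<bar>t ^ k / fact k * mat_pow S G k a b\<bar>
        = inverse (fact k) * (\<bar>t\<bar> ^ k * \<bar>mat_pow S G k a b\<bar>)"
      by (simp add: abs_mult power_abs divide_inverse)
    also have "\<dots> \<le> inverse (fact k) * (\<bar>t\<bar> ^ k * K ^ k)"
      by (intro mult_left_mono bound) auto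
    finally show "norm \<bar>t ^ k / fact k * mat_pow S G k a b\<bar> \<le> inverse (fact k) * (\<bar>t\<bar> * K) ^ k"
      by (simp add: power_mult_distrib)
  qed
  show "summable (\<lambda>k. inverse (fact k) * (\<bar>t\<bar> * K) ^ k)"
    by (rule summable_exp)
qed

text \<open>
  \<open>(A f)(i, j) = \<Sum>\<^sub>d q((i, j), d) (f d - f (i, j))\<close> for a chain selling product 1 at rate
  \<open>a\<close> (\<open>s1\<close> once product 2 is sold out) and product 2 at rate \<open>b\<close> (\<open>s2\<close> once
  product 1 is sold out).
\<close>
definition inv_generator ::
  "real \<Rightarrow> real \<Rightarrow> real \<Rightarrow> real \<Rightarrow> (nat \<times> nat \<Rightarrow> real) \<Rightarrow> nat \<times> nat \<Rightarrow> real" where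
  "inv_generator a b s1 s2 f = (\<lambda>(i, j).
     (if 1 \<le> i then (if 1 \<le> j then a else s1) * (f (i - 1, j) - f (i, j)) else 0)
   + (if 1 \<le> j then (if 1 \<le> i then b else s2) * (f (i, j - 1) - f (i, j)) else 0))"

lemma inv_rate_split:
  "inv_rate l1 l2 p12 p21 (i, j) d =
     (if 1 \<le> i \<and> d = (i - 1, j) then (if 1 \<le> j then l1 else l1 + l2 * p21) else 0)
   + (if 1 \<le> j \<and> d = (i, j - 1) then (if 1 \<le> i then l2 else l2 + l1 * p12) else 0)"
  by (auto simp: inv_rate_def)

lemma inv_gen_row_sum:
  assumes c: "c \<in> inv_states Q1 Q2"
  shows "(\<Sum>d\<in>inv_states Q1 Q2. inv_gen (inv_states Q1 Q2) l1 l2 p12 p21 c d * f d)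
    = inv_generator l1 l2 (l1 + l2 * p21) (l2 + l1 * p12) f c"
proof -
  let ?S = "inv_states Q1 Q2"
  let ?r = "inv_rate l1 l2 p12 p21 c"
  obtain i j where ij: "c = (i, j)" "i \<le> Q1" "j \<le> Q2"
    using c by (auto simp: inv_states_def)
  have fin: "finite ?S"
    by (simp add: inv_states_def)
  have "?r c = 0"
    by (auto simp: ij inv_rate_split)
  have "(\<Sum>d\<in>?S. inv_gen ?S l1 l2 p12 p21 c d * f d)
      = inv_gen ?S l1 l2 p12 p21 c c * f c + (\<Sum>d\<in>?S - {c}. ?r d * f d)"
    using fin c by (simp add: sum.remove) (rule sum.cong; auto simp: inv_gen_def)
  also have "\<dots> = (\<Sum>d\<in>?S. ?r d * (f d - f c))"
    using fin c \<open>?r c = 0\<close>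
    by (simp add: sum.remove inv_gen_def sum_distrib_right right_diff_distrib sum_subtractf)
  also have "\<dots> = inv_generator l1 l2 (l1 + l2 * p21) (l2 + l1 * p12) f c"
    using fin ij
    by (simp add: inv_rate_split inv_generator_def distrib_right sum.distrib if_distrib[of "\<lambda>x. x * _"]
        inv_states_def cong: if_cong) auto
  finally show ?thesis .
qed

text \<open>
  The chain only moves downwards, so \<open>(A\<^sup>k f)(Q)\<close> depends on \<open>f\<close> only below \<open>Q\<close>
  and one operator on functions over \<open>\<nat>\<^sup>2\<close> serves every state space
  \<^const>\<open>inv_states\<close>.
\<close>
abbreviation inv_chain_generator ::
  "real \<Rightarrow> real \<Rightarrow> real \<Rightarrow> real \<Rightarrow> (nat \<times> nat \<Rightarrow> real) \<Rightarrow> nat \<times> nat \<Rightarrow> real" where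
  "inv_chain_generator l1 l2 p12 p21 \<equiv> inv_generator l1 l2 (l1 + l2 * p21) (l2 + l1 * p12)"

lemma mat_pow_inv_gen_apply:
  assumes "c \<in> inv_states Q1 Q2"
  shows "(\<Sum>d\<in>inv_states Q1 Q2.
            mat_pow (inv_states Q1 Q2) (inv_gen (inv_states Q1 Q2) l1 l2 p12 p21) k c d * f d)
    = (inv_chain_generator l1 l2 p12 p21 ^^ k) f c"
  using assms
proof (induction k arbitrary: f)
  case 0
  have "finite (inv_states Q1 Q2)"
    by (simp add: inv_states_def)
  then show ?case
    using 0 by (simp add: if_distrib[of "\<lambda>x. x * _"] cong: if_cong)
next
  case (Suc k)
  let ?S = "inv_states Q1 Q2"
  let ?G = "inv_gen ?S l1 l2 p12 p21"
  let ?A = "inv_chain_generator l1 l2 p12 p21"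
  have "(\<Sum>d\<in>?S. mat_pow ?S ?G (Suc k) c d * f d)
      = (\<Sum>e\<in>?S. mat_pow ?S ?G k c e * (\<Sum>d\<in>?S. ?G e d * f d))"
    by (simp add: sum_distrib_right sum_distrib_left mult.assoc) (rule sum.swap)
  also have "\<dots> = (\<Sum>e\<in>?S. mat_pow ?S ?G k c e * ?A f e)"
    by (simp add: inv_gen_row_sum)
  also have "\<dots> = (?A ^^ Suc k) f c"
    using Suc by (simp add: funpow_Suc_right del: funpow.simps)
  finally show ?case .
qed

lemma inv_expect_series_term:
  "T ^ k / fact k * (inv_chain_generator l1 l2 p12 p21 ^^ k) f (Q1, Q2)
    = (\<Sum>d\<in>inv_states Q1 Q2. T ^ k / fact k
        * mat_pow (inv_states Q1 Q2) (inv_gen (inv_states Q1 Q2) l1 l2 p12 p21) k (Q1, Q2) d * f d)"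
proof -
  have "(Q1, Q2) \<in> inv_states Q1 Q2"
    by (simp add: inv_states_def)
  then show ?thesis
    by (simp add: mat_pow_inv_gen_apply[symmetric] sum_distrib_left mult.assoc)
qed

lemma inv_expect_sums:
  "(\<lambda>k. T ^ k / fact k * (inv_chain_generator l1 l2 p12 p21 ^^ k) f (Q1, Q2))
    sums inv_expect l1 l2 p12 p21 Q1 Q2 T f"
proof -
  let ?S = "inv_states Q1 Q2"
  let ?G = "inv_gen ?S l1 l2 p12 p21"
  have "(\<lambda>k. T ^ k / fact k * mat_pow ?S ?G k (Q1, Q2) d) sums ctmc_trans ?S ?G T (Q1, Q2) d"
    if "d \<in> ?S" for d
    unfolding ctmc_trans_def using that
    by (intro summable_sums summable_rabs_cancel[OF summable_abs_ctmc_trans_series])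
      (simp add: inv_states_def)
  then have "(\<lambda>k. \<Sum>d\<in>?S. T ^ k / fact k * mat_pow ?S ?G k (Q1, Q2) d * f d)
      sums (\<Sum>d\<in>?S. ctmc_trans ?S ?G T (Q1, Q2) d * f d)"
    by (intro sums_sum sums_mult2)
  then show ?thesis
    unfolding inv_expect_series_term inv_expect_def Let_def .
qed

lemma summable_inv_expect_series_abs:
  "summable (\<lambda>k. \<bar>T ^ k / fact k * (inv_chain_generator l1 l2 p12 p21 ^^ k) f (Q1, Q2)\<bar>)"
proof (rule summable_comparison_test)
  let ?S = "inv_states Q1 Q2"
  let ?m = "\<lambda>k d. T ^ k / fact k * mat_pow ?S (inv_gen ?S l1 l2 p12 p21) k (Q1, Q2) d"
  show "summable (\<lambda>k. \<Sum>d\<in>?S. \<bar>?m k d\<bar> * \<bar>f d\<bar>)"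
    by (intro summable_sum summable_mult2 summable_abs_ctmc_trans_series)
      (auto simp: inv_states_def)
  show "\<exists>N. \<forall>k\<ge>N. norm \<bar>T ^ k / fact k * (inv_chain_generator l1 l2 p12 p21 ^^ k) f (Q1, Q2)\<bar>
      \<le> (\<Sum>d\<in>?S. \<bar>?m k d\<bar> * \<bar>f d\<bar>)"
    unfolding inv_expect_series_term using sum_abs[of "\<lambda>d. ?m _ d * f d" ?S] by (simp add: abs_mult)
qed

definition mixed_diff :: "(nat \<times> nat \<Rightarrow> real) \<Rightarrow> nat \<Rightarrow> nat \<Rightarrow> real" where
  "mixed_diff g i j = g (Suc i, Suc j) - g (Suc i, j) - g (i, Suc j) + g (i, j)"

definition second_diff :: "(nat \<Rightarrow> real) \<Rightarrow> nat \<Rightarrow> real" where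
  "second_diff h n = h (Suc (Suc n)) - 2 * h (Suc n) + h n"

definition axis_convex_supermodular :: "(nat \<times> nat \<Rightarrow> real) \<Rightarrow> bool" where
  "axis_convex_supermodular g \<longleftrightarrow>
     (\<forall>i j. 0 \<le> mixed_diff g i j)
   \<and> (\<forall>i. g (i, 0) \<le> g (Suc i, 0)) \<and> (\<forall>i. 0 \<le> second_diff (\<lambda>i. g (i, 0)) i)
   \<and> (\<forall>j. g (0, j) \<le> g (0, Suc j)) \<and> (\<forall>j. 0 \<le> second_diff (\<lambda>j. g (0, j)) j)"

lemma axis_convex_supermodular_fst: "axis_convex_supermodular (\<lambda>x. real (fst x))"
  by (simp add: axis_convex_supermodular_def mixed_diff_def second_diff_def)

lemma axis_convex_supermodular_snd: "axis_convex_supermodular (\<lambda>x. real (snd x))"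
  by (simp add: axis_convex_supermodular_def mixed_diff_def second_diff_def)

text \<open>\<open>L g + A g = L (P g)\<close>, with \<open>P\<close> the one-step operator of the chain uniformized at rate \<open>L\<close>.\<close>
definition shifted_generator ::
  "real \<Rightarrow> real \<Rightarrow> real \<Rightarrow> real \<Rightarrow> real \<Rightarrow> (nat \<times> nat \<Rightarrow> real) \<Rightarrow> nat \<times> nat \<Rightarrow> real" where
  "shifted_generator L a b s1 s2 g x = L * g x + inv_generator a b s1 s2 g x"

locale uniformization_rates =
  fixes L a b s1 s2 :: real
  assumes a_nonneg: "0 \<le> a" and b_nonneg: "0 \<le> b"
    and a_le_s1: "a \<le> s1" and b_le_s2: "b \<le> s2"
    and ab_le_L: "a + b \<le> L" and s1_le_L: "s1 \<le> L" and s2_le_L: "s2 \<le> L"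
begin

abbreviation W :: "(nat \<times> nat \<Rightarrow> real) \<Rightarrow> nat \<times> nat \<Rightarrow> real" where
  "W \<equiv> shifted_generator L a b s1 s2"

context
  fixes g :: "nat \<times> nat \<Rightarrow> real"
  assumes g: "axis_convex_supermodular g"
begin

private lemma
  mixed: "0 \<le> mixed_diff g i j" and
  mono1: "g (i, 0) \<le> g (Suc i, 0)" and convex1: "0 \<le> second_diff (\<lambda>i. g (i, 0)) i" and
  mono2: "g (0, j) \<le> g (0, Suc j)" and convex2: "0 \<le> second_diff (\<lambda>j. g (0, j)) j"
  using g by (auto simp: axis_convex_supermodular_def)

private lemma coeffs_nonneg:
  "0 \<le> L - a - b" "0 \<le> s1 - a" "0 \<le> s2 - b" "0 \<le> L - s1" "0 \<le> L - s2" "0 \<le> s1" "0 \<le> s2"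
  using a_nonneg b_nonneg a_le_s1 b_le_s2 ab_le_L s1_le_L s2_le_L by auto

lemma mixed_diff_shifted_generator_nonneg: "0 \<le> mixed_diff (W g) i j"
proof (cases i; cases j)
  assume "i = 0" "j = 0"
  then have "mixed_diff (W g) i j
      = (L - a - b) * mixed_diff g 0 0
        + (s1 - a) * (g (1, 0) - g (0, 0)) + (s2 - b) * (g (0, 1) - g (0, 0))"
    by (simp add: mixed_diff_def shifted_generator_def inv_generator_def algebra_simps)
  also have "0 \<le> \<dots>"
    using coeffs_nonneg mixed mono1[of 0] mono2[of 0]
    by (intro add_nonneg_nonneg mult_nonneg_nonneg) auto
  finally show ?thesis .
next
  fix j' assume "i = 0" "j = Suc j'"
  then have "mixed_diff (W g) i j
      = (L - a - b) * mixed_diff g 0 (Suc j') + b * mixed_diff g 0 j'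
        + (s2 - b) * second_diff (\<lambda>j. g (0, j)) j'"
    by (simp add: mixed_diff_def second_diff_def shifted_generator_def inv_generator_def algebra_simps)
  also have "0 \<le> \<dots>"
    using coeffs_nonneg b_nonneg mixed convex2 by (intro add_nonneg_nonneg mult_nonneg_nonneg) auto
  finally show ?thesis .
next
  fix i' assume "i = Suc i'" "j = 0"
  then have "mixed_diff (W g) i j
      = (L - a - b) * mixed_diff g (Suc i') 0 + a * mixed_diff g i' 0
        + (s1 - a) * second_diff (\<lambda>i. g (i, 0)) i'"
    by (simp add: mixed_diff_def second_diff_def shifted_generator_def inv_generator_def algebra_simps)
  also have "0 \<le> \<dots>"
    using coeffs_nonneg a_nonneg mixed convex1 by (intro add_nonneg_nonneg mult_nonneg_nonneg) auto
  finally show ?thesis .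
next
  fix i' j' assume "i = Suc i'" "j = Suc j'"
  then have "mixed_diff (W g) i j
      = (L - a - b) * mixed_diff g (Suc i') (Suc j')
        + a * mixed_diff g i' (Suc j') + b * mixed_diff g (Suc i') j'"
    by (simp add: mixed_diff_def shifted_generator_def inv_generator_def algebra_simps)
  also have "0 \<le> \<dots>"
    using coeffs_nonneg a_nonneg b_nonneg mixed by (intro add_nonneg_nonneg mult_nonneg_nonneg) auto
  finally show ?thesis .
qed

lemma shifted_generator_mono_axis1: "W g (i, 0) \<le> W g (Suc i, 0)"
proof (cases i)
  case 0
  have "W g (Suc i, 0) - W g (i, 0) = (L - s1) * (g (1, 0) - g (0, 0))"
    using 0 by (simp add: shifted_generator_def inv_generator_def algebra_simps)
  also have "0 \<le> \<dots>"
    using coeffs_nonneg mono1[of 0] by simp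
  finally show ?thesis by simp
next
  case (Suc i')
  have "W g (Suc i, 0) - W g (i, 0)
      = (L - s1) * (g (Suc (Suc i'), 0) - g (Suc i', 0)) + s1 * (g (Suc i', 0) - g (i', 0))"
    using Suc by (simp add: shifted_generator_def inv_generator_def algebra_simps)
  also have "0 \<le> \<dots>"
    using coeffs_nonneg mono1[of i'] mono1[of "Suc i'"]
    by (intro add_nonneg_nonneg mult_nonneg_nonneg) auto
  finally show ?thesis by simp
qed

lemma shifted_generator_mono_axis2: "W g (0, j) \<le> W g (0, Suc j)"
proof (cases j)
  case 0
  have "W g (0, Suc j) - W g (0, j) = (L - s2) * (g (0, 1) - g (0, 0))"
    using 0 by (simp add: shifted_generator_def inv_generator_def algebra_simps)
  also have "0 \<le> \<dots>"
    using coeffs_nonneg mono2[of 0] by simp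
  finally show ?thesis by simp
next
  case (Suc j')
  have "W g (0, Suc j) - W g (0, j)
      = (L - s2) * (g (0, Suc (Suc j')) - g (0, Suc j')) + s2 * (g (0, Suc j') - g (0, j'))"
    using Suc by (simp add: shifted_generator_def inv_generator_def algebra_simps)
  also have "0 \<le> \<dots>"
    using coeffs_nonneg mono2[of j'] mono2[of "Suc j'"]
    by (intro add_nonneg_nonneg mult_nonneg_nonneg) auto
  finally show ?thesis by simp
qed

lemma shifted_generator_convex_axis1: "0 \<le> second_diff (\<lambda>i. W g (i, 0)) i"
proof (cases i)
  case 0
  have "second_diff (\<lambda>i. W g (i, 0)) i
      = (L - s1) * second_diff (\<lambda>i. g (i, 0)) 0 + s1 * (g (1, 0) - g (0, 0))"
    using 0 by (simp add: second_diff_def shifted_generator_def inv_generator_def algebra_simps)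
  also have "0 \<le> \<dots>"
    using coeffs_nonneg mono1[of 0] convex1[of 0]
    by (intro add_nonneg_nonneg mult_nonneg_nonneg) auto
  finally show ?thesis .
next
  case (Suc i')
  have "second_diff (\<lambda>i. W g (i, 0)) i
      = (L - s1) * second_diff (\<lambda>i. g (i, 0)) (Suc i') + s1 * second_diff (\<lambda>i. g (i, 0)) i'"
    using Suc by (simp add: second_diff_def shifted_generator_def inv_generator_def algebra_simps)
  also have "0 \<le> \<dots>"
    using coeffs_nonneg convex1 by (intro add_nonneg_nonneg mult_nonneg_nonneg) auto
  finally show ?thesis .
qed

lemma shifted_generator_convex_axis2: "0 \<le> second_diff (\<lambda>j. W g (0, j)) j"
proof (cases j)
  case 0
  have "second_diff (\<lambda>j. W g (0, j)) j
      = (L - s2) * second_diff (\<lambda>j. g (0, j)) 0 + s2 * (g (0, 1) - g (0, 0))"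
    using 0 by (simp add: second_diff_def shifted_generator_def inv_generator_def algebra_simps)
  also have "0 \<le> \<dots>"
    using coeffs_nonneg mono2[of 0] convex2[of 0]
    by (intro add_nonneg_nonneg mult_nonneg_nonneg) auto
  finally show ?thesis .
next
  case (Suc j')
  have "second_diff (\<lambda>j. W g (0, j)) j
      = (L - s2) * second_diff (\<lambda>j. g (0, j)) (Suc j') + s2 * second_diff (\<lambda>j. g (0, j)) j'"
    using Suc by (simp add: second_diff_def shifted_generator_def inv_generator_def algebra_simps)
  also have "0 \<le> \<dots>"
    using coeffs_nonneg convex2 by (intro add_nonneg_nonneg mult_nonneg_nonneg) auto
  finally show ?thesis .
qed

end

lemma axis_convex_supermodular_shifted_generator:
  "axis_convex_supermodular g \<Longrightarrow> axis_convex_supermodular (W g)"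
  using mixed_diff_shifted_generator_nonneg shifted_generator_mono_axis1 shifted_generator_mono_axis2
    shifted_generator_convex_axis1 shifted_generator_convex_axis2
  by (simp add: axis_convex_supermodular_def)

lemma axis_convex_supermodular_shifted_generator_pow:
  "axis_convex_supermodular g \<Longrightarrow> axis_convex_supermodular ((W ^^ n) g)"
  by (induction n) (simp_all add: axis_convex_supermodular_shifted_generator)

end

lemma binomial_sum_Suc:
  fixes x :: real and g :: "nat \<Rightarrow> real"
  shows "(\<Sum>m\<le>Suc n. real (Suc n choose m) * x ^ (Suc n - m) * g m)
    = x * (\<Sum>m\<le>n. real (n choose m) * x ^ (n - m) * g m)
      + (\<Sum>m\<le>n. real (n choose m) * x ^ (n - m) * g (Suc m))"
proof -
  have "x * (\<Sum>m\<le>n. real (n choose m) * x ^ (n - m) * g m)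
      = (\<Sum>m\<le>Suc n. real (n choose m) * x ^ (Suc n - m) * g m)"
    by (simp add: sum_distrib_left Suc_diff_le mult_ac)
  also have "\<dots> = x ^ Suc n * g 0 + (\<Sum>m\<le>n. real (n choose Suc m) * x ^ (n - m) * g (Suc m))"
    by (subst sum.atMost_Suc_shift) simp
  finally show ?thesis
    by (subst sum.atMost_Suc_shift) (simp add: sum.distrib algebra_simps)
qed

lemma inv_generator_sum:
  "inv_generator a b s1 s2 (\<lambda>x. \<Sum>m\<in>M. w m * h m x)
    = (\<lambda>x. \<Sum>m\<in>M. w m * inv_generator a b s1 s2 (h m) x)"
  by (auto simp: inv_generator_def sum_distrib_left sum_subtractf sum.distrib algebra_simps)

lemma shifted_generator_pow_binomial:
  "(shifted_generator L a b s1 s2 ^^ n) f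
    = (\<lambda>x. \<Sum>m\<le>n. real (n choose m) * L ^ (n - m) * (inv_generator a b s1 s2 ^^ m) f x)"
proof (induction n)
  case 0
  show ?case by simp
next
  case (Suc n)
  let ?A = "inv_generator a b s1 s2"
  show ?case
  proof
    fix x
    have "(shifted_generator L a b s1 s2 ^^ Suc n) f x
        = L * (\<Sum>m\<le>n. real (n choose m) * L ^ (n - m) * (?A ^^ m) f x)
          + (\<Sum>m\<le>n. real (n choose m) * L ^ (n - m) * (?A ^^ Suc m) f x)"
      unfolding funpow.simps comp_def Suc.IH
      by (simp add: shifted_generator_def inv_generator_sum)
    also have "\<dots> = (\<Sum>m\<le>Suc n. real (Suc n choose m) * L ^ (Suc n - m) * (?A ^^ m) f x)"
      by (rule binomial_sum_Suc[symmetric])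
    finally show "(shifted_generator L a b s1 s2 ^^ Suc n) f x
        = (\<Sum>m\<le>Suc n. real (Suc n choose m) * L ^ (Suc n - m) * (?A ^^ m) f x)" .
  qed
qed

lemma shifted_generator_series_sums:
  "(\<lambda>n. T ^ n / fact n * (shifted_generator L l1 l2 (l1 + l2 * p21) (l2 + l1 * p12) ^^ n) f (Q1, Q2))
    sums (inv_expect l1 l2 p12 p21 Q1 Q2 T f * exp (L * T))"
proof -
  let ?A = "inv_chain_generator l1 l2 p12 p21"
  define u where "u k = T ^ k / fact k * (?A ^^ k) f (Q1, Q2)" for k
  define e where "e k = (L * T) ^ k / fact k" for k
  have "e = (\<lambda>k. (L * T) ^ k /\<^sub>R fact k)"
    by (simp add: e_def fun_eq_iff divide_inverse mult.commute)
  then have e_sums: "e sums exp (L * T)"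
    using exp_converges by (simp only:)
  have "summable (\<lambda>k. norm (e k))"
    using summable_exp[of "\<bar>L * T\<bar>"]
    by (simp add: e_def abs_mult power_abs divide_inverse mult.commute)
  moreover have "summable (\<lambda>k. norm (u k))"
    using summable_inv_expect_series_abs by (simp add: u_def)
  ultimately have "(\<lambda>n. \<Sum>i\<le>n. u i * e (n - i)) sums (suminf u * suminf e)"
    by (intro Cauchy_product_sums)
  moreover have "(\<Sum>i\<le>n. u i * e (n - i))
      = T ^ n / fact n * (shifted_generator L l1 l2 (l1 + l2 * p21) (l2 + l1 * p12) ^^ n) f (Q1, Q2)" for n
  proof -
    have "u i * e (n - i) = T ^ n / fact n * (real (n choose i) * L ^ (n - i) * (?A ^^ i) f (Q1, Q2))"
      if "i \<le> n" for i
      using that by (simp add: u_def e_def binomial_fact power_add[symmetric] field_simps)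
    then show ?thesis
      by (simp add: shifted_generator_pow_binomial sum_distrib_left)
  qed
  moreover have "u sums inv_expect l1 l2 p12 p21 Q1 Q2 T f"
    unfolding u_def by (rule inv_expect_sums)
  ultimately show ?thesis
    using e_sums by (simp add: sums_iff)
qed

lemma inv_expect_supermodular:
  assumes rates: "0 \<le> l1" "0 \<le> l2" "0 \<le> p12" "0 \<le> p21" and "0 \<le> T"
    and f: "axis_convex_supermodular f"
  shows "0 \<le> mixed_diff (\<lambda>(q1, q2). inv_expect l1 l2 p12 p21 q1 q2 T f) Q1 Q2"
proof -
  define L where "L = l1 + l2 + l1 * p12 + l2 * p21"
  interpret uniformization_rates L l1 l2 "l1 + l2 * p21" "l2 + l1 * p12"
    using rates by unfold_locales (auto simp: L_def)
  let ?E = "\<lambda>(q1, q2). inv_expect l1 l2 p12 p21 q1 q2 T f"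
  have series: "(\<lambda>n. T ^ n / fact n * mixed_diff ((W ^^ n) f) Q1 Q2)
      sums (mixed_diff ?E Q1 Q2 * exp (L * T))"
    unfolding mixed_diff_def prod.case right_diff_distrib distrib_left left_diff_distrib distrib_right
    by (intro sums_add sums_diff shifted_generator_series_sums)
  have terms_nonneg: "0 \<le> T ^ n / fact n * mixed_diff ((W ^^ n) f) Q1 Q2" for n
    using axis_convex_supermodular_shifted_generator_pow[OF f, of n] \<open>0 \<le> T\<close>
    by (simp add: axis_convex_supermodular_def)
  have "0 \<le> mixed_diff ?E Q1 Q2 * exp (L * T)"
    by (rule sums_le[OF terms_nonneg sums_zero series])
  then show ?thesis
    by (simp add: zero_le_mult_iff)
qed

theorem theorem2:
  fixes T l1 l2 p12 p21 r1 r2 c1 c2 h1 h2 :: real and Q1 Q2 :: nat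
  assumes "T > 0" and "l1 > 0" and "l2 > 0"
    and "0 \<le> p12" and "p12 \<le> 1" and "0 \<le> p21" and "p21 \<le> 1"
    and "r1 \<ge> 0" and "r2 \<ge> 0" and "h1 \<ge> 0" and "h2 \<ge> 0"
  shows "pi1 T l1 l2 p12 p21 r1 r2 c1 c2 h1 h2 (Q1 + 1) (Q2 + 1)
       - pi1 T l1 l2 p12 p21 r1 r2 c1 c2 h1 h2 (Q1 + 1) Q2
       - pi1 T l1 l2 p12 p21 r1 r2 c1 c2 h1 h2 Q1 (Q2 + 1)
       + pi1 T l1 l2 p12 p21 r1 r2 c1 c2 h1 h2 Q1 Q2 \<le> 0"
proof -
  let ?D = "\<lambda>f. mixed_diff (\<lambda>(q1, q2). inv_expect l1 l2 p12 p21 q1 q2 T f) Q1 Q2"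
  have "0 \<le> ?D (\<lambda>x. real (fst x))" "0 \<le> ?D (\<lambda>x. real (snd x))"
    using assms
    by (auto intro!: inv_expect_supermodular axis_convex_supermodular_fst axis_convex_supermodular_snd)
  then have "0 \<le> (r1 + h1) * ?D (\<lambda>x. real (fst x)) + (r2 + h2) * ?D (\<lambda>x. real (snd x))"
    using assms by simp
  moreover have "pi1 T l1 l2 p12 p21 r1 r2 c1 c2 h1 h2 (Q1 + 1) (Q2 + 1)
       - pi1 T l1 l2 p12 p21 r1 r2 c1 c2 h1 h2 (Q1 + 1) Q2
       - pi1 T l1 l2 p12 p21 r1 r2 c1 c2 h1 h2 Q1 (Q2 + 1)
       + pi1 T l1 l2 p12 p21 r1 r2 c1 c2 h1 h2 Q1 Q2
     = - (1 / T) * ((r1 + h1) * ?D (\<lambda>x. real (fst x)) + (r2 + h2) * ?D (\<lambda>x. real (snd x)))"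
    unfolding pi1_def mixed_diff_def by (simp add: algebra_simps)
  ultimately show ?thesis
    using \<open>T > 0\<close> by (simp add: mult_nonneg_nonneg)
qed

end
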